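(* Let $(\mathbb{Z},H^+)$ be a simple component and let $N_H$ be the unique element of $H^+$ with $N_H-1\notin H^+$ and $N_H+k\in H^+$ for all $k\in\mathbb{Z}^+$. Let $a\in\mathbb{N}$, and let $p,c,d\in\mathbb{N}$ satisfy $\gcd(a,p)=\gcd(a,c)=\gcd(c,d)=1$, $pc\equiv pd\equiv1\pmod a$, $p\in H^+$, $pc>aN_H$ and $d>\max\{(a-1)pc+a(N_H-1),\ ac\}$. Let $G^+=aH^++p\langle c,d\rangle=\{ah+pz: h\in H^+, z\in\langle c,d\rangle\}$. Then for every integer $i$ with $0\le i\le a-1$ and every $x\in\mathbb{Z}\setminus H^+$ we have $ipc+ax\notin G^+$. In particular, setting $l_i=ipc+a(N_H-1)$ for $0\le i\le a-1$, the set $L_H=\{l_0,\dots,l_{a-1}\}$ satisfies $L_H\cap G^+=\emptyset$. Moreover, for each $0\le i\le a-1$, every integer congruent to $i$ modulo $a$ and greater than $l_i$ belongs to $G^+$.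
   Context: A simple component is a simple partially ordered abelian group of the form $(\mathbb{Z},P)$ (simple: every nonzero element $u$ of $P$ is an order-unit, i.e. for all $x$ there is $n$ with $nu\pm x\in P$); its cone $P$ is a submonoid of $\mathbb{Z}^+$ containing all sufficiently large integers. $\langle c,d\rangle$ is the submonoid of $\mathbb{Z}^+$ generated by $c$ and $d$. *)

theory Defs
  imports Main
begin

definition is_order_unit :: "int set \<Rightarrow> int \<Rightarrow> bool" where
  "is_order_unit P u \<longleftrightarrow> (\<forall>x. \<exists>n::nat. int n * u + x \<in> P \<and> int n * u - x \<in> P)"

definition simple_component :: "int set \<Rightarrow> bool" where
  "simple_component P \<longleftrightarrow>
     0 \<in> P \<and> (\<forall>x\<in>P. \<forall>y\<in>P. x + y \<in> P) \<and> P \<subseteq> {0..} \<and>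
     (\<exists>M. \<forall>n\<ge>M. n \<in> P) \<and> (\<forall>u\<in>P. u \<noteq> 0 \<longrightarrow> is_order_unit P u)"

definition gen2 :: "int \<Rightarrow> int \<Rightarrow> int set" where
  "gen2 c d = {int m * c + int n * d | m n. True}"

end

theory Submission
  imports Defs
begin

text \<open>Write \<open>z = m c + n d\<close>. Since \<open>d\<close> exceeds every candidate \<open>i p c + a x\<close> with \<open>x \<notin> H\<^sup>+\<close>
  (such \<open>x\<close> lie below \<open>N\<^sub>H\<close>), a representation \<open>i p c + a x = a h + p z\<close> cannot use \<open>d\<close>,
  so \<open>a (x - h) = (m - i) p c\<close>. As \<open>p c \<equiv> 1 (mod a)\<close>, this forces \<open>m = i + a k\<close> with \<open>k \<ge> 0\<close>,
  whence \<open>x = h + k p c \<in> H\<^sup>+\<close>. Conversely, an integer \<open>n \<equiv> i (mod a)\<close> above \<open>l\<^sub>i\<close> is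
  \<open>a y + p (i c)\<close> with \<open>y \<ge> N\<^sub>H\<close>.\<close>

definition dilate_sum :: "int \<Rightarrow> int set \<Rightarrow> int \<Rightarrow> int set \<Rightarrow> int set" where
  "dilate_sum a H p Z = {a * h + p * z | h z. h \<in> H \<and> z \<in> Z}"

lemma submonoid_nat_mult_mem:
  fixes H :: "int set"
  assumes "0 \<in> H" "\<And>x y. x \<in> H \<Longrightarrow> y \<in> H \<Longrightarrow> x + y \<in> H" "q \<in> H"
  shows "int k * q \<in> H"
proof (induction k)
  case 0
  then show ?case using assms(1) by simp
next
  case (Suc k)
  then show ?case using assms(2,3) by (simp add: algebra_simps)
qed

lemma below_conductor_if_not_mem:
  fixes H :: "int set"
  assumes "\<And>k. k \<ge> 0 \<Longrightarrow> N + k \<in> H" "x \<notin> H"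
  shows "x \<le> N - 1"
  using assms(1)[of "x - N"] assms(2) by force

lemma dvd_of_dvd_mult_cong_one:
  fixes a t u :: int
  assumes "u mod a = 1 mod a" "a dvd t * u"
  shows "a dvd t"
proof -
  have "(t * u) mod a = t mod a"
    by (metis assms(1) mod_mult_right_eq mult.right_neutral)
  then show ?thesis using assms(2) by (simp add: dvd_eq_mod_eq_0)
qed

lemma gen2_coeff_eq_0_if_less:
  fixes h :: int and a p m n c d :: nat
  assumes "0 \<le> h" "0 < p" "int a * h + int p * (int m * int c + int n * int d) < int d"
  shows "n = 0"
proof (rule ccontr)
  assume "n \<noteq> 0"
  then have "int d \<le> int m * int c + int n * int d"
    by (simp add: add_increasing mult_le_cancel_right1)
  also have "\<dots> \<le> int p * (int m * int c + int n * int d)"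
    using \<open>0 < p\<close> mult_right_mono[of 1 "int p" "int m * int c + int n * int d"] by simp
  also have "\<dots> \<le> int a * h + int p * (int m * int c + int n * int d)"
    using \<open>0 \<le> h\<close> by simp
  finally show False using assms(3) by simp
qed

lemma gap_not_mem_dilate_sum:
  fixes H :: "int set" and N x :: int and a p c d i :: nat
  assumes zero: "0 \<in> H" and add: "\<And>x y. x \<in> H \<Longrightarrow> y \<in> H \<Longrightarrow> x + y \<in> H"
    and nonneg: "H \<subseteq> {0..}" and conductor: "\<And>k. k \<ge> 0 \<Longrightarrow> N + k \<in> H"
    and p: "int p \<in> H" "0 < p" and cong: "(p * c) mod a = 1 mod a"
    and d: "int d > (int a - 1) * int (p * c) + int a * (N - 1)"
    and i: "i < a" and x: "x \<notin> H"
  shows "int (i * p * c) + int a * x \<notin> dilate_sum (int a) H (int p) (gen2 (int c) (int d))"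
proof
  assume "int (i * p * c) + int a * x \<in> dilate_sum (int a) H (int p) (gen2 (int c) (int d))"
  then obtain h m n where h: "h \<in> H"
    and eq: "int (i * p * c) + int a * x = int a * h + int p * (int m * int c + int n * int d)"
    unfolding dilate_sum_def gen2_def by blast
  have "int i * int (p * c) \<le> (int a - 1) * int (p * c)"
    using i by (intro mult_right_mono) auto
  moreover have "int a * x \<le> int a * (N - 1)"
    using below_conductor_if_not_mem[OF conductor x] by (simp add: mult_left_mono)
  ultimately have "int (i * p * c) + int a * x < int d"
    using d by (simp add: mult.assoc)
  then have "n = 0"
    using gen2_coeff_eq_0_if_less[of h p a m c n d] eq h nonneg p(2) by auto
  then have eq': "int a * (x - h) = (int m - int i) * int (p * c)"
    using eq by (simp add: algebra_simps)
  have "int a dvd (int m - int i)"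
    using dvd_of_dvd_mult_cong_one[of "int (p * c)" "int a"] eq' cong
    by (metis dvd_triv_left of_nat_1 of_nat_mod)
  then obtain k where k: "int m - int i = int a * k" by blast
  have "int a * -1 < int a * k"
    using k i by simp
  then have "0 \<le> k"
    using mult_less_cancel_left_pos[of "int a" "-1" k] i by simp
  have "x - h = k * int (p * c)"
    using eq' k i by (simp add: mult.assoc)
  then have "x = h + int (nat k * c) * int p"
    using \<open>0 \<le> k\<close> by (simp add: algebra_simps)
  moreover have "int (nat k * c) * int p \<in> H"
    using submonoid_nat_mult_mem[OF zero add p(1)] .
  ultimately show False using x h add by simp
qed

lemma mem_dilate_sum_above_gap:
  fixes H :: "int set" and N n :: int and a p c d i :: nat
  assumes conductor: "\<And>k. k \<ge> 0 \<Longrightarrow> N + k \<in> H" and cong: "(p * c) mod a = 1 mod a"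
    and i: "i < a" and n: "n mod int a = int i" "n > int (i * p * c) + int a * (N - 1)"
  shows "n \<in> dilate_sum (int a) H (int p) (gen2 (int c) (int d))"
proof -
  have "int (i * p * c) mod int a = int i"
    using cong i by (metis mod_mult_right_eq mod_less mult.assoc mult.right_neutral of_nat_mod)
  then have "int a dvd n - int (i * p * c)"
    using n(1) mod_eq_dvd_iff by metis
  then obtain y where y: "n = int a * y + int p * int (i * c)"
    by (auto simp: dvd_def algebra_simps)
  have "int a * (N - 1) < int a * y"
    using y n(2) by (simp add: algebra_simps)
  then have "N \<le> y"
    using mult_less_cancel_left_pos[of "int a" "N - 1" y] i by simp
  then have "y \<in> H"
    using conductor[of "y - N"] by simp
  moreover have "int (i * c) \<in> gen2 (int c) (int d)"
    unfolding gen2_def by (rule CollectI, rule exI[of _ i], rule exI[of _ 0]) simp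
  ultimately show ?thesis
    unfolding dilate_sum_def using y by blast
qed

theorem proposition4p3:
  fixes H :: "int set" and N :: int and a p c d :: nat and G :: "int set"
  assumes simple: "simple_component H"
    and NH: "N \<in> H" "N - 1 \<notin> H" "\<forall>k::int. k \<ge> 0 \<longrightarrow> N + k \<in> H"
    and gcds: "gcd a p = 1" "gcd a c = 1" "gcd c d = 1"
    and cong: "(p * c) mod a = 1 mod a" "(p * d) mod a = 1 mod a"
    and pH: "int p \<in> H"
    and pc: "int (p * c) > int a * N"
    and dbig: "int d > max ((int a - 1) * int (p * c) + int a * (N - 1)) (int (a * c))"
    and G_def: "G = {int a * h + int p * z | h z. h \<in> H \<and> z \<in> gen2 (int c) (int d)}"
  shows "(\<forall>i::nat. \<forall>x::int. i < a \<and> x \<notin> H \<longrightarrow>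
            int (i * p * c) + int a * x \<notin> G)
     \<and> {int (i * p * c) + int a * (N - 1) | i. i < a} \<inter> G = {}
     \<and> (\<forall>i::nat. i < a \<longrightarrow> (\<forall>n::int. n mod int a = int i \<and>
            n > int (i * p * c) + int a * (N - 1) \<longrightarrow> n \<in> G))"
proof -
  have G: "G = dilate_sum (int a) H (int p) (gen2 (int c) (int d))"
    unfolding G_def dilate_sum_def ..
  have H: "0 \<in> H" "\<And>x y. x \<in> H \<Longrightarrow> y \<in> H \<Longrightarrow> x + y \<in> H" "H \<subseteq> {0..}"
    using simple by (auto simp: simple_component_def)
  have "0 \<le> int a * N"
    using H(3) NH(1) by auto
  then have "0 < p"
    using pc by (cases p) auto
  have gap: "int (i * p * c) + int a * x \<notin> G" if "i < a" "x \<notin> H" for i x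
    unfolding G using gap_not_mem_dilate_sum[OF H _ pH \<open>0 < p\<close> cong(1) _ that] NH(3) dbig
    by (simp only: max_less_iff_conj) blast
  moreover have "{int (i * p * c) + int a * (N - 1) | i. i < a} \<inter> G = {}"
    using gap NH(2) by blast
  moreover have "n \<in> G" if "i < a" "n mod int a = int i"
      "n > int (i * p * c) + int a * (N - 1)" for i n
    unfolding G using mem_dilate_sum_above_gap[OF _ cong(1) that] NH(3) by simp
  ultimately show ?thesis by blast
qed

end
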